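(* Let $V, L\ge 1$, $\mathcal{D}=[V]^L$, let $\pi$ be a joint distribution on $\mathcal{D}\times\mathcal{D}$, and let $\kappa:[0,1]\to[0,1]$ be differentiable with $\kappa_0=0$, $\kappa_1=1$, $\kappa_t<1$ for $t<1$. Let $p_t(x)=\sum_{x_0,x_1}\pi(x_0,x_1)\prod_{i=1}^L[(1-\kappa_t)\delta_{x_0^i}(x^i)+\kappa_t\delta_{x_1^i}(x^i)]$ and let $u_t^i(x^i,z)=\sum_{x_0,x_1}\frac{\dot\kappa_t}{1-\kappa_t}[\delta_{x_1^i}(x^i)-\delta_{z^i}(x^i)]\,p_t(x_0,x_1\mid z)$, where $p_t(x_0,x_1\mid z)=p_t(z\mid x_0,x_1)\pi(x_0,x_1)/p_t(z)$ with $p_t(z\mid x_0,x_1)=\prod_{i=1}^L[(1-\kappa_t)\delta_{x_0^i}(z^i)+\kappa_t\delta_{x_1^i}(z^i)]$. Take the similarity $s(a,b)=1-\delta_{b}(a)$ (the discrete metric on $[V]$). Then $c(x_0,x_1)=\sum_{i=1}^L s(x_0^i,x_1^i)=d_H(x_0,x_1)$, so that $$\int_0^1\sum_{x_t}p_t(x_t)\Big[\sum_{i=1}^L\sum_{x^i\ne x_t^i}u_t^i(x^i,x_t)\Big]dt=\sum_{x_0,x_1}d_H(x_0,x_1)\,\pi(x_0,x_1).$$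
   Context: $d_H(x_0,x_1)=\#\{i: x_0^i\neq x_1^i\}$ is the Hamming distance on $[V]^L$. $\delta_a(b)=1$ if $a=b$ and $0$ otherwise. Terms with $p_t(x_t)=0$ contribute zero. *)

theory Defs
  imports "HOL-Analysis.Analysis"
begin

text \<open>Indices are 0-based: the alphabet [V] is {0..<V}, positions are {0..<L}.
  A sequence x in D = [V]^L is a function nat => nat, extensional outside {0..<L}.\<close>

definition seqs :: "nat \<Rightarrow> nat \<Rightarrow> (nat \<Rightarrow> nat) set" where
  "seqs V L = PiE {0..<L} (\<lambda>_. {0..<V})"

definition delta :: "nat \<Rightarrow> nat \<Rightarrow> real" where
  "delta a b = (if a = b then 1 else 0)"

definition hamming :: "nat \<Rightarrow> (nat \<Rightarrow> nat) \<Rightarrow> (nat \<Rightarrow> nat) \<Rightarrow> nat" where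
  "hamming L x0 x1 = card {i \<in> {0..<L}. x0 i \<noteq> x1 i}"

definition simil :: "nat \<Rightarrow> nat \<Rightarrow> real" where
  "simil a b = 1 - delta b a"

definition cond_path :: "nat \<Rightarrow> (real \<Rightarrow> real) \<Rightarrow> real \<Rightarrow> (nat \<Rightarrow> nat) \<Rightarrow> (nat \<Rightarrow> nat) \<Rightarrow> (nat \<Rightarrow> nat) \<Rightarrow> real" where
  "cond_path L \<kappa> t z x0 x1 =
     (\<Prod>i\<in>{0..<L}. (1 - \<kappa> t) * delta (x0 i) (z i) + \<kappa> t * delta (x1 i) (z i))"

definition marg_path :: "nat \<Rightarrow> nat \<Rightarrow> ((nat \<Rightarrow> nat) \<Rightarrow> (nat \<Rightarrow> nat) \<Rightarrow> real) \<Rightarrow> (real \<Rightarrow> real) \<Rightarrow> real \<Rightarrow> (nat \<Rightarrow> nat) \<Rightarrow> real" where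
  "marg_path V L \<pi> \<kappa> t x =
     (\<Sum>x0\<in>seqs V L. \<Sum>x1\<in>seqs V L. \<pi> x0 x1 * cond_path L \<kappa> t x x0 x1)"

text \<open>posterior p_t(x0, x1 | z) (division by zero gives 0 in HOL)\<close>
definition posterior :: "nat \<Rightarrow> nat \<Rightarrow> ((nat \<Rightarrow> nat) \<Rightarrow> (nat \<Rightarrow> nat) \<Rightarrow> real) \<Rightarrow> (real \<Rightarrow> real) \<Rightarrow> real \<Rightarrow> (nat \<Rightarrow> nat) \<Rightarrow> (nat \<Rightarrow> nat) \<Rightarrow> (nat \<Rightarrow> nat) \<Rightarrow> real" where
  "posterior V L \<pi> \<kappa> t x0 x1 z =
     cond_path L \<kappa> t z x0 x1 * \<pi> x0 x1 / marg_path V L \<pi> \<kappa> t z"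

text \<open>velocity u_t^i(a, z); \<kappa>' is the derivative of \<kappa>\<close>
definition velocity :: "nat \<Rightarrow> nat \<Rightarrow> ((nat \<Rightarrow> nat) \<Rightarrow> (nat \<Rightarrow> nat) \<Rightarrow> real) \<Rightarrow> (real \<Rightarrow> real) \<Rightarrow> (real \<Rightarrow> real) \<Rightarrow> real \<Rightarrow> nat \<Rightarrow> nat \<Rightarrow> (nat \<Rightarrow> nat) \<Rightarrow> real" where
  "velocity V L \<pi> \<kappa> \<kappa>' t i a z =
     (\<Sum>x0\<in>seqs V L. \<Sum>x1\<in>seqs V L.
        \<kappa>' t / (1 - \<kappa> t) * (delta (x1 i) a - delta (z i) a) * posterior V L \<pi> \<kappa> t x0 x1 z)"

end

theory Submission
  imports Defs
begin

(* Multiplying the velocity by p_t(z) cancels the denominator of the posterior, so the total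
   jump rate at time t is kappa'_t / (1 - kappa_t) times the expected number of positions i
   with z^i different from x_1^i under the coupling.  The conditional path is a product over
   positions, so position i disagrees with x_1^i exactly when it still carries x_0^i, which
   differs from x_1^i; this has probability 1 - kappa_t.  Hence the rate is
   kappa'_t * E d_H(x_0, x_1), and integrating kappa' over [0,1] gives kappa_1 - kappa_0 = 1. *)

lemma sum_PiE_prod_mult_coordinate:
  fixes f :: "'a \<Rightarrow> 'b \<Rightarrow> 'c::comm_semiring_1"
  assumes "finite I" "i \<in> I" "\<And>j. j \<in> I \<Longrightarrow> finite (A j)"
  shows "(\<Sum>z\<in>PiE I A. (\<Prod>j\<in>I. f j (z j)) * h (z i))
       = (\<Sum>v\<in>A i. f i v * h v) * (\<Prod>j\<in>I - {i}. \<Sum>v\<in>A j. f j v)"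
proof -
  define g where "g j v = (if j = i then f j v * h v else f j v)" for j v
  have "(\<Prod>j\<in>I. g j (z j)) = (\<Prod>j\<in>I. f j (z j)) * h (z i)" for z
  proof -
    have "(\<Prod>j\<in>I. g j (z j)) = g i (z i) * (\<Prod>j\<in>I - {i}. g j (z j))"
      using assms(1,2) by (rule prod.remove)
    also have "\<dots> = f i (z i) * h (z i) * (\<Prod>j\<in>I - {i}. f j (z j))"
      by (simp add: g_def)
    also have "\<dots> = (\<Prod>j\<in>I. f j (z j)) * h (z i)"
      using assms(1,2) by (simp add: prod.remove[of I i] ac_simps)
    finally show ?thesis .
  qed
  then have "(\<Sum>z\<in>PiE I A. (\<Prod>j\<in>I. f j (z j)) * h (z i)) = (\<Prod>j\<in>I. \<Sum>v\<in>A j. g j v)"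
    using assms(1,3) by (simp add: prod_sum_PiE)
  also have "\<dots> = (\<Sum>v\<in>A i. g i v) * (\<Prod>j\<in>I - {i}. \<Sum>v\<in>A j. g j v)"
    using assms(1,2) by (rule prod.remove)
  also have "\<dots> = (\<Sum>v\<in>A i. f i v * h v) * (\<Prod>j\<in>I - {i}. \<Sum>v\<in>A j. f j v)"
    by (simp add: g_def)
  finally show ?thesis .
qed

lemma finite_seqs [simp]: "finite (seqs V L)"
  by (simp add: seqs_def finite_PiE)

lemma seqs_apply_less: "x \<in> seqs V L \<Longrightarrow> j < L \<Longrightarrow> x j < V"
  by (auto simp: seqs_def PiE_iff)

lemma real_hamming_eq_sum: "real (hamming L x0 x1) = (\<Sum>i\<in>{0..<L}. of_bool (x0 i \<noteq> x1 i))"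
  unfolding hamming_def by (simp add: Int_def atLeast0LessThan)

lemma simil_eq_of_bool: "simil a b = of_bool (a \<noteq> b)"
  by (simp add: simil_def delta_def)

lemma sum_simil_eq_hamming: "(\<Sum>i\<in>{0..<L}. simil (x0 i) (x1 i)) = real (hamming L x0 x1)"
  by (simp add: real_hamming_eq_sum simil_eq_of_bool)

lemma sum_cond_path_mismatch:
  assumes x0: "x0 \<in> seqs V L" and x1: "x1 \<in> seqs V L" and i: "i < L"
  shows "(\<Sum>z\<in>seqs V L. cond_path L \<kappa> t z x0 x1 * of_bool (x1 i \<noteq> z i))
       = (1 - \<kappa> t) * of_bool (x0 i \<noteq> x1 i)"
proof -
  let ?w = "\<lambda>j v. (1 - \<kappa> t) * delta (x0 j) v + \<kappa> t * delta (x1 j) v"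
  have total: "(\<Sum>v\<in>{0..<V}. ?w j v) = 1" if "j < L" for j
    using seqs_apply_less[OF x0 that] seqs_apply_less[OF x1 that]
    by (simp add: delta_def sum.distrib sum_distrib_left[symmetric])
  have "?w i v * of_bool (x1 i \<noteq> v) = (if v = x0 i then (1 - \<kappa> t) * of_bool (x0 i \<noteq> x1 i) else 0)"
    for v by (auto simp: delta_def)
  then have mismatch: "(\<Sum>v\<in>{0..<V}. ?w i v * of_bool (x1 i \<noteq> v)) = (1 - \<kappa> t) * of_bool (x0 i \<noteq> x1 i)"
    using seqs_apply_less[OF x0 i] by (simp only: sum.delta' finite_atLeastLessThan) simp
  have "(\<Sum>z\<in>seqs V L. cond_path L \<kappa> t z x0 x1 * of_bool (x1 i \<noteq> z i))
      = (\<Sum>v\<in>{0..<V}. ?w i v * of_bool (x1 i \<noteq> v)) * (\<Prod>j\<in>{0..<L} - {i}. \<Sum>v\<in>{0..<V}. ?w j v)"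
    unfolding cond_path_def seqs_def by (rule sum_PiE_prod_mult_coordinate) (use i in auto)
  also have "\<dots> = (1 - \<kappa> t) * of_bool (x0 i \<noteq> x1 i)"
    by (simp add: mismatch total)
  finally show ?thesis .
qed

lemma cond_path_nonneg: "0 \<le> \<kappa> t \<Longrightarrow> \<kappa> t \<le> 1 \<Longrightarrow> 0 \<le> cond_path L \<kappa> t z x0 x1"
  unfolding cond_path_def by (intro prod_nonneg) (auto simp: delta_def)

lemma marg_path_mult_posterior:
  assumes "0 \<le> \<kappa> t" "\<kappa> t \<le> 1" and "\<forall>x0\<in>seqs V L. \<forall>x1\<in>seqs V L. 0 \<le> \<pi> x0 x1"
    and x0: "x0 \<in> seqs V L" and x1: "x1 \<in> seqs V L"
  shows "marg_path V L \<pi> \<kappa> t z * posterior V L \<pi> \<kappa> t x0 x1 z = cond_path L \<kappa> t z x0 x1 * \<pi> x0 x1"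
proof (cases "marg_path V L \<pi> \<kappa> t z = 0")
  case True
  \<comment> \<open>The posterior takes the junk value 0, but so does every (nonnegative) summand of p_t(z).\<close>
  let ?S = "seqs V L \<times> seqs V L"
  have nonneg: "0 \<le> \<pi> (fst p) (snd p) * cond_path L \<kappa> t z (fst p) (snd p)" if "p \<in> ?S" for p
    using assms that cond_path_nonneg by auto
  have "(\<Sum>p\<in>?S. \<pi> (fst p) (snd p) * cond_path L \<kappa> t z (fst p) (snd p)) = 0"
    using True by (simp add: marg_path_def sum.cartesian_product split_def)
  then have "\<pi> x0 x1 * cond_path L \<kappa> t z x0 x1 = 0"
    using x0 x1 by (subst (asm) sum_nonneg_eq_0_iff) (auto intro: nonneg)
  with True show ?thesis by (simp add: mult.commute)
next
  case False
  then show ?thesis by (simp add: posterior_def)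
qed

lemma marg_path_mult_velocity:
  assumes "0 \<le> \<kappa> t" "\<kappa> t \<le> 1" and "\<forall>x0\<in>seqs V L. \<forall>x1\<in>seqs V L. 0 \<le> \<pi> x0 x1"
    and "a \<noteq> z i"
  shows "marg_path V L \<pi> \<kappa> t z * velocity V L \<pi> \<kappa> \<kappa>' t i a z
       = \<kappa>' t / (1 - \<kappa> t) *
         (\<Sum>x0\<in>seqs V L. \<Sum>x1\<in>seqs V L. \<pi> x0 x1 * cond_path L \<kappa> t z x0 x1 * delta (x1 i) a)"
proof -
  have "marg_path V L \<pi> \<kappa> t z * velocity V L \<pi> \<kappa> \<kappa>' t i a z
      = \<kappa>' t / (1 - \<kappa> t) * (\<Sum>x0\<in>seqs V L. \<Sum>x1\<in>seqs V L.
          delta (x1 i) a * (marg_path V L \<pi> \<kappa> t z * posterior V L \<pi> \<kappa> t x0 x1 z))"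
    using \<open>a \<noteq> z i\<close> by (simp add: velocity_def delta_def sum_distrib_left ac_simps)
  also have "\<dots> = \<kappa>' t / (1 - \<kappa> t) *
      (\<Sum>x0\<in>seqs V L. \<Sum>x1\<in>seqs V L. \<pi> x0 x1 * cond_path L \<kappa> t z x0 x1 * delta (x1 i) a)"
    using assms(1-3) by (simp add: marg_path_mult_posterior ac_simps cong: sum.cong)
  finally show ?thesis .
qed

lemma marg_path_mult_exit_rate:
  assumes "0 \<le> \<kappa> t" "\<kappa> t \<le> 1" and "\<forall>x0\<in>seqs V L. \<forall>x1\<in>seqs V L. 0 \<le> \<pi> x0 x1"
    and "i < L"
  shows "marg_path V L \<pi> \<kappa> t z * (\<Sum>a\<in>{0..<V} - {z i}. velocity V L \<pi> \<kappa> \<kappa>' t i a z)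
       = \<kappa>' t / (1 - \<kappa> t) *
         (\<Sum>x0\<in>seqs V L. \<Sum>x1\<in>seqs V L. \<pi> x0 x1 * cond_path L \<kappa> t z x0 x1 * of_bool (x1 i \<noteq> z i))"
proof -
  let ?A = "{0..<V} - {z i}"
  have delta_sum: "(\<Sum>a\<in>?A. delta (x1 i) a) = of_bool (x1 i \<noteq> z i)" if "x1 \<in> seqs V L" for x1
    using seqs_apply_less[OF that \<open>i < L\<close>] by (simp add: delta_def)
  have "marg_path V L \<pi> \<kappa> t z * (\<Sum>a\<in>?A. velocity V L \<pi> \<kappa> \<kappa>' t i a z)
      = \<kappa>' t / (1 - \<kappa> t) * (\<Sum>a\<in>?A. \<Sum>x0\<in>seqs V L. \<Sum>x1\<in>seqs V L.
          \<pi> x0 x1 * cond_path L \<kappa> t z x0 x1 * delta (x1 i) a)"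
    using assms(1-3) by (simp add: sum_distrib_left marg_path_mult_velocity)
  also have "\<dots> = \<kappa>' t / (1 - \<kappa> t) * (\<Sum>x0\<in>seqs V L. \<Sum>x1\<in>seqs V L.
          \<pi> x0 x1 * cond_path L \<kappa> t z x0 x1 * (\<Sum>a\<in>?A. delta (x1 i) a))"
    by (simp add: sum_distrib_left sum.swap[of _ ?A])
  also have "\<dots> = \<kappa>' t / (1 - \<kappa> t) *
      (\<Sum>x0\<in>seqs V L. \<Sum>x1\<in>seqs V L. \<pi> x0 x1 * cond_path L \<kappa> t z x0 x1 * of_bool (x1 i \<noteq> z i))"
    using delta_sum by (simp cong: sum.cong)
  finally show ?thesis .
qed

lemma sum_cond_path_hamming:
  assumes "x0 \<in> seqs V L" "x1 \<in> seqs V L"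
  shows "(\<Sum>z\<in>seqs V L. cond_path L \<kappa> t z x0 x1 * real (hamming L x1 z))
       = (1 - \<kappa> t) * real (hamming L x0 x1)"
proof -
  have "(\<Sum>z\<in>seqs V L. cond_path L \<kappa> t z x0 x1 * real (hamming L x1 z))
      = (\<Sum>i\<in>{0..<L}. \<Sum>z\<in>seqs V L. cond_path L \<kappa> t z x0 x1 * of_bool (x1 i \<noteq> z i))"
    by (simp only: real_hamming_eq_sum sum_distrib_left sum.swap[where B = "{0..<L}"])
  also have "\<dots> = (\<Sum>i\<in>{0..<L}. (1 - \<kappa> t) * of_bool (x0 i \<noteq> x1 i))"
    by (intro sum.cong refl sum_cond_path_mismatch) (use assms in auto)
  also have "\<dots> = (1 - \<kappa> t) * real (hamming L x0 x1)"
    by (simp only: real_hamming_eq_sum sum_distrib_left)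
  finally show ?thesis .
qed

lemma marg_path_mult_total_exit_rate:
  assumes "0 \<le> \<kappa> t" "\<kappa> t \<le> 1" and "\<forall>x0\<in>seqs V L. \<forall>x1\<in>seqs V L. 0 \<le> \<pi> x0 x1"
  shows "marg_path V L \<pi> \<kappa> t z * (\<Sum>i\<in>{0..<L}. \<Sum>a\<in>{0..<V} - {z i}. velocity V L \<pi> \<kappa> \<kappa>' t i a z)
       = \<kappa>' t / (1 - \<kappa> t) *
         (\<Sum>x0\<in>seqs V L. \<Sum>x1\<in>seqs V L. \<pi> x0 x1 * cond_path L \<kappa> t z x0 x1 * real (hamming L x1 z))"
proof -
  have "marg_path V L \<pi> \<kappa> t z * (\<Sum>i\<in>{0..<L}. \<Sum>a\<in>{0..<V} - {z i}. velocity V L \<pi> \<kappa> \<kappa>' t i a z)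
      = (\<Sum>i\<in>{0..<L}. marg_path V L \<pi> \<kappa> t z * (\<Sum>a\<in>{0..<V} - {z i}. velocity V L \<pi> \<kappa> \<kappa>' t i a z))"
    by (rule sum_distrib_left)
  also have "\<dots> = (\<Sum>i\<in>{0..<L}. \<kappa>' t / (1 - \<kappa> t) * (\<Sum>x0\<in>seqs V L. \<Sum>x1\<in>seqs V L.
      \<pi> x0 x1 * cond_path L \<kappa> t z x0 x1 * of_bool (x1 i \<noteq> z i)))"
    by (rule sum.cong[OF refl], rule marg_path_mult_exit_rate) (use assms in auto)
  also have "\<dots> = \<kappa>' t / (1 - \<kappa> t) *
      (\<Sum>x0\<in>seqs V L. \<Sum>x1\<in>seqs V L. \<pi> x0 x1 * cond_path L \<kappa> t z x0 x1 * real (hamming L x1 z))"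
    by (simp only: real_hamming_eq_sum sum_distrib_left sum.swap[where A = "{0..<L}"])
  finally show ?thesis .
qed

lemma sum_marg_path_mult_exit_rates:
  assumes "0 \<le> \<kappa> t" "\<kappa> t < 1" and "\<forall>x0\<in>seqs V L. \<forall>x1\<in>seqs V L. 0 \<le> \<pi> x0 x1"
  shows "(\<Sum>z\<in>seqs V L. marg_path V L \<pi> \<kappa> t z *
            (\<Sum>i\<in>{0..<L}. \<Sum>a\<in>{0..<V} - {z i}. velocity V L \<pi> \<kappa> \<kappa>' t i a z))
       = \<kappa>' t * (\<Sum>x0\<in>seqs V L. \<Sum>x1\<in>seqs V L. real (hamming L x0 x1) * \<pi> x0 x1)"
proof -
  let ?S = "seqs V L"
  have "(\<Sum>z\<in>?S. marg_path V L \<pi> \<kappa> t z *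
            (\<Sum>i\<in>{0..<L}. \<Sum>a\<in>{0..<V} - {z i}. velocity V L \<pi> \<kappa> \<kappa>' t i a z))
      = (\<Sum>z\<in>?S. \<kappa>' t / (1 - \<kappa> t) *
          (\<Sum>x0\<in>?S. \<Sum>x1\<in>?S. \<pi> x0 x1 * cond_path L \<kappa> t z x0 x1 * real (hamming L x1 z)))"
    using assms by (intro sum.cong refl marg_path_mult_total_exit_rate) auto
  also have "\<dots> = \<kappa>' t / (1 - \<kappa> t) *
        (\<Sum>z\<in>?S. \<Sum>x0\<in>?S. \<Sum>x1\<in>?S. \<pi> x0 x1 * cond_path L \<kappa> t z x0 x1 * real (hamming L x1 z))"
    by (rule sum_distrib_left[symmetric])
  also have "(\<Sum>z\<in>?S. \<Sum>x0\<in>?S. \<Sum>x1\<in>?S. \<pi> x0 x1 * cond_path L \<kappa> t z x0 x1 * real (hamming L x1 z))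
      = (\<Sum>x0\<in>?S. \<Sum>x1\<in>?S. \<pi> x0 x1 * (\<Sum>z\<in>?S. cond_path L \<kappa> t z x0 x1 * real (hamming L x1 z)))"
    by (simp only: sum_distrib_left mult.assoc)
      (rule trans[OF sum.swap sum.cong[OF refl sum.swap]])
  also have "\<dots> = (\<Sum>x0\<in>?S. \<Sum>x1\<in>?S. \<pi> x0 x1 * ((1 - \<kappa> t) * real (hamming L x0 x1)))"
    by (simp add: sum_cond_path_hamming cong: sum.cong)
  finally show ?thesis
    using assms by (simp add: sum_distrib_left ac_simps)
qed

theorem corollary1:
  fixes V L :: nat
    and \<pi> :: "(nat \<Rightarrow> nat) \<Rightarrow> (nat \<Rightarrow> nat) \<Rightarrow> real"
    and \<kappa> \<kappa>' :: "real \<Rightarrow> real"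
  assumes "V \<ge> 1" and "L \<ge> 1"
    and "\<forall>x0\<in>seqs V L. \<forall>x1\<in>seqs V L. \<pi> x0 x1 \<ge> 0"
    and "(\<Sum>x0\<in>seqs V L. \<Sum>x1\<in>seqs V L. \<pi> x0 x1) = 1"
    and "\<forall>t\<in>{0..1}. (\<kappa> has_real_derivative \<kappa>' t) (at t within {0..1})"
    and "\<forall>t\<in>{0..1}. 0 \<le> \<kappa> t \<and> \<kappa> t \<le> 1"
    and "\<kappa> 0 = 0" and "\<kappa> 1 = 1"
    and "\<forall>t\<in>{0..<1}. \<kappa> t < 1"
  shows "(\<forall>x0\<in>seqs V L. \<forall>x1\<in>seqs V L.
            (\<Sum>i\<in>{0..<L}. simil (x0 i) (x1 i)) = real (hamming L x0 x1))
       \<and> ((\<lambda>t. \<Sum>xt\<in>seqs V L. marg_path V L \<pi> \<kappa> t xt *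
               (\<Sum>i\<in>{0..<L}. \<Sum>a\<in>{0..<V} - {xt i}. velocity V L \<pi> \<kappa> \<kappa>' t i a xt))
          has_integral
          (\<Sum>x0\<in>seqs V L. \<Sum>x1\<in>seqs V L. real (hamming L x0 x1) * \<pi> x0 x1)) {0..1}"
proof -
  let ?C = "\<Sum>x0\<in>seqs V L. \<Sum>x1\<in>seqs V L. real (hamming L x0 x1) * \<pi> x0 x1"
  have "(\<kappa>' has_integral \<kappa> 1 - \<kappa> 0) {0..1}"
    using assms(5) by (intro fundamental_theorem_of_calculus)
      (auto simp: has_real_derivative_iff_has_vector_derivative)
  then have "((\<lambda>t. \<kappa>' t * ?C) has_integral (\<kappa> 1 - \<kappa> 0) * ?C) {0..1}"
    by (rule has_integral_mult_left)
  then have "((\<lambda>t. \<kappa>' t * ?C) has_integral ?C) {0..1}"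
    using assms(7,8) by simp
  then have "((\<lambda>t. \<Sum>xt\<in>seqs V L. marg_path V L \<pi> \<kappa> t xt *
               (\<Sum>i\<in>{0..<L}. \<Sum>a\<in>{0..<V} - {xt i}. velocity V L \<pi> \<kappa> \<kappa>' t i a xt))
          has_integral ?C) {0..1}"
    \<comment> \<open>At t = 1 the velocity divides by 1 - \<kappa> 1 = 0; a single point does not matter.\<close>
    by (rule has_integral_spike[OF negligible_sing[of 1], rotated])
      (use assms(3,6,9) in \<open>auto intro!: sum_marg_path_mult_exit_rates\<close>)
  then show ?thesis
    using sum_simil_eq_hamming by blast
qed

end
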